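(* For integers $m\ge1$ and $1\le i\le m$, let $F_{m,i}(n,k)$ be the number of partitions $\lambda$ of $n$ with $X_{m,i}(\lambda)=k$. Then, as formal power series in $q,u$, $$\sum_{n,k\ge0}F_{m,i}(n,k)q^nu^k=\prod_{a\ge0}\left(\prod_{b=1}^{i-1}\frac{1}{1-u^aq^{am+b}}\prod_{b=i}^{m}\frac{1}{1-u^{a+1}q^{am+b}}\right).$$
   Context: For a partition $\lambda:\ n=\lambda_1+\dots+\lambda_k$ with $\lambda_1\ge\dots\ge\lambda_k\ge1$, $X_{m,i}(\lambda)=\sum_{j\equiv i\pmod m}\lambda_j$, the sum of the parts whose index is congruent to $i$ modulo $m$. *)

theory Defs
  imports "HOL-Computational_Algebra.Formal_Power_Series"
begin

definition partitions :: "nat \<Rightarrow> nat list set" where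
  "partitions n = {xs. sorted_wrt (\<ge>) xs \<and> (\<forall>x\<in>set xs. 0 < x) \<and> sum_list xs = n}"

text \<open>X_{m,i}(lambda): sum of the parts lambda_j (1-indexed j) with j congruent to i mod m.
  The list entry xs!j is the part lambda_(j+1).\<close>
definition Xmi :: "nat \<Rightarrow> nat \<Rightarrow> nat list \<Rightarrow> nat" where
  "Xmi m i xs = (\<Sum>j<length xs. if (j + 1) mod m = i mod m then xs ! j else 0)"

definition Fmi :: "nat \<Rightarrow> nat \<Rightarrow> nat \<Rightarrow> nat \<Rightarrow> nat" where
  "Fmi m i n k = card {xs \<in> partitions n. Xmi m i xs = k}"

text \<open>Bivariate formal power series in q,u are modelled as (rat fps) fps:
  the outer variable is q (fps_X), the inner variable u is fps_const fps_X.\<close>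
definition qvar :: "rat fps fps" where "qvar = fps_X"
definition uvar :: "rat fps fps" where "uvar = fps_const fps_X"

definition gen_F :: "nat \<Rightarrow> nat \<Rightarrow> rat fps fps" where
  "gen_F m i = Abs_fps (\<lambda>n. Abs_fps (\<lambda>k. of_nat (Fmi m i n k)))"

definition prod_factor :: "nat \<Rightarrow> nat \<Rightarrow> nat \<Rightarrow> rat fps fps" where
  "prod_factor m i a =
     (\<Prod>b\<in>{1..<i}. inverse (1 - uvar ^ a * qvar ^ (a * m + b))) *
     (\<Prod>b\<in>{i..m}. inverse (1 - uvar ^ (a + 1) * qvar ^ (a * m + b)))"

end

theory Submission
  imports Defs
begin

(* A partition with at most P parts is written as a weakly decreasing list of exactly P
  entries, padded with zeros. Such a list either ends in 0, or it arises from a list of the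
  same kind by adding 1 to every entry, i.e. by adding a column of height P to the Young
  diagram. That column raises n by P and X_{m,i} by the number c_P = residue_count m i P of
  indices j \<le> P with j \<equiv> i (mod m). Hence these lists have the generating function
  \<Prod>_{p \<le> P} 1/(1 - u^{c_p} q^p). As c_{am+b} = a + [i \<le> b] for 1 \<le> b \<le> m, the first N
  factors of the product in the theorem are exactly the case P = N m, and a partition of n
  has at most n parts. *)

unbundle fps_syntax

(* The coefficient ring 'a fps is not a field, so inverse_mult_eq_1' does not apply. *)
lemma fps_fps_mult_inverse_eq_1:
  fixes f :: "'a :: field fps fps"
  assumes "f $ 0 = 1"
  shows "f * inverse f = 1"
  using fps_right_inverse[of f 1] assms unfolding fps_inverse_def[of f] by simp

definition residue_count :: "nat \<Rightarrow> nat \<Rightarrow> nat \<Rightarrow> nat" where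
  "residue_count m i p = card {j. j < p \<and> Suc j mod m = i mod m}"

lemma residue_count_Suc:
  "residue_count m i (Suc p) = residue_count m i p + (if Suc p mod m = i mod m then 1 else 0)"
proof -
  have "{j. j < Suc p \<and> Suc j mod m = i mod m} =
      {j. j < p \<and> Suc j mod m = i mod m} \<union> {j. j = p \<and> Suc p mod m = i mod m}"
    by (auto simp: less_Suc_eq)
  then show ?thesis by (simp add: residue_count_def card_Un_disjoint)
qed

lemma residue_count_eq_div:
  assumes "1 \<le> i" "i \<le> m"
  shows "residue_count m i p = (p + m - i) div m"
proof (induction p)
  case 0
  then show ?case using assms by (simp add: residue_count_def)
next
  case (Suc p)
  have "Suc p mod m = i mod m \<longleftrightarrow> Suc (p + m - i) mod m = 0"
    using assms by (metis Suc_diff_le add_Suc dvd_imp_mod_0 le_add2 le_trans mod_add_self2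
        mod_eq_dvd_iff_nat mod_greater_zero_iff_not_dvd)
  with Suc show ?case
    using assms by (simp add: residue_count_Suc div_Suc Suc_diff_le trans_le_add2)
qed

lemma residue_count_block:
  assumes "1 \<le> i" "i \<le> m" "b \<le> m"
  shows "residue_count m i (a * m + b) = a + (if i \<le> b then 1 else 0)"
proof -
  have "a * m + b + m - i = (b + m - i) + a * m"
    using assms by simp
  then have "residue_count m i (a * m + b) = ((b + m - i) + a * m) div m"
    by (simp only: residue_count_eq_div[OF assms(1,2)])
  also have "\<dots> = a + (b + m - i) div m"
    using assms by (subst div_mult_self1) auto
  also have "\<dots> = a + (if i \<le> b then 1 else 0)"
    using assms by (auto simp: div_eq_0_iff le_div_geq)
  finally show ?thesis .
qed

lemma Xmi_append_replicate_0: "Xmi m i (xs @ replicate r 0) = Xmi m i xs"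
proof -
  let ?c = "\<lambda>j. (j + 1) mod m = i mod m"
  have "Xmi m i (xs @ replicate r 0) = (\<Sum>j<length xs. if ?c j then (xs @ replicate r 0) ! j else 0)"
    unfolding Xmi_def by (rule sum.mono_neutral_right) (auto simp: nth_append)
  also have "\<dots> = Xmi m i xs"
    unfolding Xmi_def by (rule sum.cong) (auto simp: nth_append)
  finally show ?thesis .
qed

lemma Xmi_map_Suc: "Xmi m i (map Suc xs) = Xmi m i xs + residue_count m i (length xs)"
proof -
  let ?c = "\<lambda>j. Suc j mod m = i mod m"
  have "Xmi m i (map Suc xs) = (\<Sum>j<length xs. (if ?c j then xs ! j else 0) + (if ?c j then 1 else 0))"
    unfolding Xmi_def by (rule sum.cong) auto
  also have "\<dots> = Xmi m i xs + card {j \<in> {..<length xs}. ?c j}"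
    by (simp add: sum.distrib Xmi_def flip: sum.inter_filter)
  finally show ?thesis
    by (simp add: residue_count_def lessThan_def conj_commute)
qed

definition padded_partitions :: "nat \<Rightarrow> nat \<Rightarrow> nat list set" where
  "padded_partitions P n = {xs. length xs = P \<and> sorted_wrt (\<ge>) xs \<and> sum_list xs = n}"

definition gen_padded :: "nat \<Rightarrow> nat \<Rightarrow> nat \<Rightarrow> rat fps fps" where
  "gen_padded m i P = Abs_fps (\<lambda>n. \<Sum>xs\<in>padded_partitions P n. fps_X ^ Xmi m i xs)"

lemma finite_padded_partitions: "finite (padded_partitions P n)"
proof (rule finite_subset)
  show "padded_partitions P n \<subseteq> {xs. set xs \<subseteq> {..n} \<and> length xs = P}"
    by (auto simp: padded_partitions_def member_le_sum_list)
qed (simp add: finite_lists_length_eq)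

lemma sorted_wrt_ge_last_le:
  "sorted_wrt (\<ge>) xs \<Longrightarrow> x \<in> set xs \<Longrightarrow> last xs \<le> (x :: 'a :: linorder)"
  by (induction xs) (auto intro: order_trans)

lemma padded_partitions_last_0:
  "{xs \<in> padded_partitions (Suc P) n. last xs = 0} = (\<lambda>ys. ys @ [0]) ` padded_partitions P n"
proof (intro equalityI subsetI)
  fix xs assume xs: "xs \<in> {xs \<in> padded_partitions (Suc P) n. last xs = 0}"
  then obtain ys where "xs = ys @ [0]"
    by (cases xs rule: rev_cases) (auto simp: padded_partitions_def)
  with xs show "xs \<in> (\<lambda>ys. ys @ [0]) ` padded_partitions P n"
    by (auto simp: padded_partitions_def sorted_wrt_append)
qed (auto simp: padded_partitions_def sorted_wrt_append)

lemma padded_partitions_last_nonzero: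
  "{xs \<in> padded_partitions (Suc P) n. last xs \<noteq> 0} =
     (if Suc P \<le> n then map Suc ` padded_partitions (Suc P) (n - Suc P) else {})"
proof (intro equalityI subsetI)
  fix xs assume "xs \<in> {xs \<in> padded_partitions (Suc P) n. last xs \<noteq> 0}"
  then have xs: "length xs = Suc P" "sorted_wrt (\<ge>) xs" "sum_list xs = n" "last xs \<noteq> 0"
    by (auto simp: padded_partitions_def)
  have pos: "\<forall>x\<in>set xs. 0 < x"
    using xs sorted_wrt_ge_last_le[of xs] by fastforce
  define ys where "ys = map (\<lambda>x. x - 1) xs"
  have "xs = map Suc ys"
    using pos by (auto simp: ys_def intro: map_idI[symmetric])
  moreover have "sum_list ys + Suc P = n"
    using xs(1,3) sum_list_Suc[of "\<lambda>x. x" ys] by (simp add: \<open>xs = map Suc ys\<close>)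
  moreover have "sorted_wrt (\<ge>) ys"
    unfolding ys_def sorted_wrt_map by (rule sorted_wrt_mono_rel[OF _ xs(2)]) auto
  ultimately show "xs \<in> (if Suc P \<le> n then map Suc ` padded_partitions (Suc P) (n - Suc P) else {})"
    using xs(1) by (auto simp: padded_partitions_def)
next
  fix xs assume "xs \<in> (if Suc P \<le> n then map Suc ` padded_partitions (Suc P) (n - Suc P) else {})"
  then obtain ys where ys: "Suc P \<le> n" "ys \<in> padded_partitions (Suc P) (n - Suc P)"
    and xs: "xs = map Suc ys"
    by (auto split: if_splits)
  then have "ys \<noteq> []"
    by (auto simp: padded_partitions_def)
  with ys show "xs \<in> {xs \<in> padded_partitions (Suc P) n. last xs \<noteq> 0}"
    unfolding xs using sum_list_Suc[of "\<lambda>x. x" ys]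
    by (auto simp: padded_partitions_def sorted_wrt_map last_map)
qed

lemma gen_padded_0: "gen_padded m i 0 = 1"
proof (rule fps_ext)
  fix n
  have "padded_partitions 0 n = (if n = 0 then {[]} else {})"
    by (auto simp: padded_partitions_def)
  then show "gen_padded m i 0 $ n = 1 $ n"
    by (simp add: gen_padded_def Xmi_def)
qed

lemma gen_padded_Suc_nth:
  "gen_padded m i (Suc P) $ n = gen_padded m i P $ n +
     (if Suc P \<le> n then fps_X ^ residue_count m i (Suc P) * gen_padded m i (Suc P) $ (n - Suc P)
      else 0)"
proof -
  let ?w = "\<lambda>xs. (fps_X :: rat fps) ^ Xmi m i xs"
  let ?A = "padded_partitions (Suc P) n"
  have "gen_padded m i (Suc P) $ n = sum ?w {xs \<in> ?A. last xs = 0} + sum ?w {xs \<in> ?A. last xs \<noteq> 0}"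
    unfolding gen_padded_def fps_nth_Abs_fps
    by (subst sum.union_disjoint[symmetric]) (auto simp: finite_padded_partitions intro: sum.cong)
  also have "sum ?w {xs \<in> ?A. last xs = 0} = gen_padded m i P $ n"
    using Xmi_append_replicate_0[of m i _ 1]
    by (simp add: padded_partitions_last_0 sum.reindex inj_on_def gen_padded_def)
  also have "sum ?w {xs \<in> ?A. last xs \<noteq> 0} =
      (if Suc P \<le> n then fps_X ^ residue_count m i (Suc P) * gen_padded m i (Suc P) $ (n - Suc P)
       else 0)"
  proof (cases "Suc P \<le> n")
    case True
    let ?B = "padded_partitions (Suc P) (n - Suc P)"
    have "sum ?w (map Suc ` ?B) = (\<Sum>ys\<in>?B. ?w (map Suc ys))"
      by (simp add: sum.reindex inj_on_def)
    also have "\<dots> = (\<Sum>ys\<in>?B. fps_X ^ residue_count m i (Suc P) * ?w ys)"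
      by (rule sum.cong) (auto simp: Xmi_map_Suc power_add padded_partitions_def)
    finally show ?thesis
      using True unfolding padded_partitions_last_nonzero by (simp add: gen_padded_def sum_distrib_left)
  qed (unfold padded_partitions_last_nonzero, simp)
  finally show ?thesis .
qed

lemma gen_padded_Suc_mult:
  "gen_padded m i (Suc P) * (1 - uvar ^ residue_count m i (Suc P) * qvar ^ Suc P) = gen_padded m i P"
proof (rule fps_ext)
  fix n
  let ?c = "residue_count m i (Suc P)"
  have shift: "uvar ^ ?c * qvar ^ Suc P * gen_padded m i (Suc P) =
      fps_const (fps_X ^ ?c) * (fps_X ^ Suc P * gen_padded m i (Suc P))"
    by (simp add: uvar_def qvar_def mult.assoc)
  have "(uvar ^ ?c * qvar ^ Suc P * gen_padded m i (Suc P)) $ n =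
      (if Suc P \<le> n then fps_X ^ ?c * gen_padded m i (Suc P) $ (n - Suc P) else 0)"
    unfolding shift fps_mult_left_const_nth fps_X_power_mult_nth by auto
  then show "(gen_padded m i (Suc P) * (1 - uvar ^ ?c * qvar ^ Suc P)) $ n = gen_padded m i P $ n"
    by (simp add: gen_padded_Suc_nth algebra_simps)
qed

definition column_factor :: "nat \<Rightarrow> nat \<Rightarrow> nat \<Rightarrow> rat fps fps" where
  "column_factor m i p = inverse (1 - uvar ^ residue_count m i p * qvar ^ p)"

lemma gen_padded_eq_prod_column_factor:
  "gen_padded m i P = (\<Prod>j<P. column_factor m i (Suc j))"
proof (induction P)
  case 0
  then show ?case by (simp add: gen_padded_0)
next
  case (Suc P)
  let ?f = "1 - uvar ^ residue_count m i (Suc P) * qvar ^ Suc P"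
  have "?f $ 0 = 1"
    by (simp add: uvar_def qvar_def)
  then have "gen_padded m i (Suc P) = gen_padded m i (Suc P) * ?f * inverse ?f"
    by (simp add: mult.assoc fps_fps_mult_inverse_eq_1)
  also have "\<dots> = gen_padded m i P * column_factor m i (Suc P)"
    by (simp only: gen_padded_Suc_mult column_factor_def)
  finally show ?case
    using Suc by simp
qed

lemma prod_factor_eq_prod_column_factor:
  assumes "1 \<le> i" "i \<le> m"
  shows "prod_factor m i a = (\<Prod>j\<in>{a * m..<a * m + m}. column_factor m i (Suc j))"
proof -
  have "(\<Prod>j\<in>{a * m..<a * m + m}. column_factor m i (Suc j)) =
      (\<Prod>b\<in>{1..m}. column_factor m i (a * m + b))"
    by (rule prod.reindex_bij_witness[where i = "\<lambda>b. a * m + b - 1" and j = "\<lambda>j. Suc j - a * m"])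
      auto
  also have "\<dots> = (\<Prod>b\<in>{1..<i}. column_factor m i (a * m + b)) *
      (\<Prod>b\<in>{i..m}. column_factor m i (a * m + b))"
    using assms by (simp add: prod.union_disjoint[symmetric] ivl_disj_un_two(7) ivl_disj_int)
  also have "\<dots> = prod_factor m i a"
  proof -
    have "(\<Prod>b\<in>{1..<i}. column_factor m i (a * m + b)) =
        (\<Prod>b\<in>{1..<i}. inverse (1 - uvar ^ a * qvar ^ (a * m + b)))"
      by (rule prod.cong) (use residue_count_block[OF assms] assms in \<open>auto simp: column_factor_def\<close>)
    moreover have "(\<Prod>b\<in>{i..m}. column_factor m i (a * m + b)) =
        (\<Prod>b\<in>{i..m}. inverse (1 - uvar ^ (a + 1) * qvar ^ (a * m + b)))"
      by (rule prod.cong) (use residue_count_block[OF assms] in \<open>auto simp: column_factor_def\<close>)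
    ultimately show ?thesis
      by (simp add: prod_factor_def)
  qed
  finally show ?thesis ..
qed

lemma sorted_wrt_ge_eq_filter_pos_append_zeros:
  "sorted_wrt (\<ge>) (xs :: nat list) \<Longrightarrow>
     xs = filter (\<lambda>x. 0 < x) xs @ replicate (length xs - length (filter (\<lambda>x. 0 < x) xs)) 0"
  by (induction xs) (auto simp: Suc_diff_le filter_empty_conv intro: replicate_eqI)

lemma length_le_sum_list_if_pos: "\<forall>x\<in>set xs. (0::nat) < x \<Longrightarrow> length xs \<le> sum_list xs"
  by (induction xs) auto

lemma bij_betw_partitions_padded_partitions:
  assumes "n \<le> P"
  shows "bij_betw (\<lambda>ys. ys @ replicate (P - length ys) 0) (partitions n) (padded_partitions P n)"
proof (rule bij_betw_byWitness[where f' = "filter (\<lambda>x. 0 < x)"])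
  show "\<forall>ys\<in>partitions n. filter (\<lambda>x. 0 < x) (ys @ replicate (P - length ys) 0) = ys"
    by (auto simp: partitions_def filter_id_conv)
  show "\<forall>xs\<in>padded_partitions P n.
      filter (\<lambda>x. 0 < x) xs @ replicate (P - length (filter (\<lambda>x. 0 < x) xs)) 0 = xs"
    using sorted_wrt_ge_eq_filter_pos_append_zeros by (auto simp: padded_partitions_def)
  show "(\<lambda>ys. ys @ replicate (P - length ys) 0) ` partitions n \<subseteq> padded_partitions P n"
  proof clarify
    fix ys assume "ys \<in> partitions n"
    then have "sorted_wrt (\<ge>) ys" "\<forall>x\<in>set ys. 0 < x" "sum_list ys = n"
      by (auto simp: partitions_def)
    moreover have "sorted_wrt (\<ge>) (replicate (P - length ys) (0::nat))"
      by (simp add: sorted_wrt_iff_nth_less)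
    ultimately show "ys @ replicate (P - length ys) 0 \<in> padded_partitions P n"
      using length_le_sum_list_if_pos[of ys] assms
      by (auto simp: padded_partitions_def sorted_wrt_append)
  qed
  show "filter (\<lambda>x. 0 < x) ` padded_partitions P n \<subseteq> partitions n"
    using sum_list_map_filter[of _ "\<lambda>x. 0 < x" "\<lambda>x. x"]
    by (auto simp: padded_partitions_def partitions_def sorted_wrt_filter)
qed

lemma gen_padded_nth_eq_gen_F_nth:
  assumes "n \<le> P"
  shows "gen_padded m i P $ n = gen_F m i $ n"
proof -
  let ?w = "\<lambda>xs. (fps_X :: rat fps) ^ Xmi m i xs"
  have bij: "bij_betw (\<lambda>ys. ys @ replicate (P - length ys) 0) (partitions n) (padded_partitions P n)"
    using assms by (rule bij_betw_partitions_padded_partitions)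
  then have fin: "finite (partitions n)"
    using bij_betw_finite finite_padded_partitions by blast
  have "gen_padded m i P $ n = (\<Sum>ys\<in>partitions n. ?w (ys @ replicate (P - length ys) 0))"
    using sum.reindex_bij_betw[OF bij, of ?w] by (simp add: gen_padded_def)
  also have "\<dots> = (\<Sum>ys\<in>partitions n. ?w ys)"
    by (simp add: Xmi_append_replicate_0)
  also have "\<dots> = gen_F m i $ n"
  proof (rule fps_ext)
    fix k
    have "(\<Sum>ys\<in>partitions n. ?w ys) $ k = of_nat (card {ys \<in> partitions n. Xmi m i ys = k})"
      using fin by (simp add: fps_sum_nth eq_commute flip: sum.inter_filter)
    then show "(\<Sum>ys\<in>partitions n. ?w ys) $ k = gen_F m i $ n $ k"
      by (simp add: gen_F_def Fmi_def)
  qed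
  finally show ?thesis .
qed

theorem mainTheorem7:
  fixes m i :: nat
  assumes "1 \<le> m" and "1 \<le> i" and "i \<le> m"
  shows "(\<lambda>N. \<Prod>a<N. prod_factor m i a) \<longlonglongrightarrow> gen_F m i"
proof (rule tendsto_fpsI)
  fix n
  have "(\<Prod>a<N. prod_factor m i a) = gen_padded m i (N * m)" for N
    by (simp add: prod_factor_eq_prod_column_factor[OF assms(2,3)] prod.nat_group
        gen_padded_eq_prod_column_factor)
  moreover have "n \<le> N * m" if "n \<le> N" for N
    using that assms(1) by (metis le_trans mult.right_neutral mult_le_mono2)
  ultimately have "(\<Prod>a<N. prod_factor m i a) $ n = gen_F m i $ n" if "n \<le> N" for N
    using that by (simp add: gen_padded_nth_eq_gen_F_nth)
  then show "eventually (\<lambda>N. (\<Prod>a<N. prod_factor m i a) $ n = gen_F m i $ n) sequentially"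
    by (rule eventually_sequentiallyI)
qed

end
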